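(* Let $F$ be a forest, let $k,s\ge 0$ be integers, and for $1\le i\le s$ let $\mathcal{F}_i$ be a set of $s!\,k$ paths of $F$ that are pairwise anticomplete. Then there exist $P^i_1,\ldots,P^i_k\in\mathcal{F}_i$ for $1\le i\le s$ such that these $sk$ paths are pairwise anticomplete.
   Context: Two subgraphs of a graph are anticomplete if their vertex sets are disjoint and no edge of the graph joins a vertex of one to a vertex of the other. *)

theory Defs
  imports Main
begin

definition simple_graph :: "'a set \<Rightarrow> ('a \<Rightarrow> 'a \<Rightarrow> bool) \<Rightarrow> bool" where
  "simple_graph V E \<longleftrightarrow> finite V \<and> (\<forall>x y. E x y \<longrightarrow> x \<in> V \<and> y \<in> V)
     \<and> (\<forall>x y. E x y \<longrightarrow> E y x) \<and> (\<forall>x. \<not> E x x)"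

definition is_cycle :: "'a set \<Rightarrow> ('a \<Rightarrow> 'a \<Rightarrow> bool) \<Rightarrow> 'a list \<Rightarrow> bool" where
  "is_cycle V E c \<longleftrightarrow> length c \<ge> 3 \<and> distinct c \<and> set c \<subseteq> V
     \<and> (\<forall>i. Suc i < length c \<longrightarrow> E (c ! i) (c ! Suc i))
     \<and> E (last c) (hd c)"

definition forest :: "'a set \<Rightarrow> ('a \<Rightarrow> 'a \<Rightarrow> bool) \<Rightarrow> bool" where
  "forest V E \<longleftrightarrow> simple_graph V E \<and> (\<nexists>c. is_cycle V E c)"

definition is_path :: "'a set \<Rightarrow> ('a \<Rightarrow> 'a \<Rightarrow> bool) \<Rightarrow> 'a list \<Rightarrow> bool" where
  "is_path V E p \<longleftrightarrow> p \<noteq> [] \<and> distinct p \<and> set p \<subseteq> V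
     \<and> (\<forall>i. Suc i < length p \<longrightarrow> E (p ! i) (p ! Suc i))"

definition anticomplete :: "('a \<Rightarrow> 'a \<Rightarrow> bool) \<Rightarrow> 'a set \<Rightarrow> 'a set \<Rightarrow> bool" where
  "anticomplete E A B \<longleftrightarrow> A \<inter> B = {} \<and> (\<forall>x\<in>A. \<forall>y\<in>B. \<not> E x y)"

end

theory Submission
  imports Defs
begin

text \<open>In a forest, every nonempty set U of paths contains a path P together with a vertex or
  an edge {a, b} such that every path of U touching P passes through a or b. Two anticomplete
  paths cannot both meet {a, b}, so taking P for one family costs every pairwise anticomplete
  family at most one further path. Filling s k slots greedily therefore only needs families of
  size s k, which is at most s! k.\<close>

lemma simple_graph_symp: "simple_graph V E \<Longrightarrow> symp E"
  by (simp add: simple_graph_def symp_def)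

lemma anticomplete_commute: "symp E \<Longrightarrow> anticomplete E A B \<longleftrightarrow> anticomplete E B A"
  unfolding anticomplete_def by (blast dest: sympD)

lemma is_path_iff_successively:
  "is_path V E p \<longleftrightarrow> p \<noteq> [] \<and> distinct p \<and> set p \<subseteq> V \<and> successively E p"
  unfolding is_path_def successively_conv_nth by blast

lemma is_path_Cons:
  assumes "is_path V E p" "z \<in> V" "z \<notin> set p" "E z (hd p)"
  shows "is_path V E (z # p)"
  using assms by (cases p) (auto simp: is_path_iff_successively)

lemma is_cycle_take_chord:
  assumes p: "is_path V E p" and "symp E" and j: "2 \<le> j" "j < length p"
    and chord: "E (hd p) (p ! j)"
  shows "is_cycle V E (take (Suc j) p)"
  unfolding is_cycle_def
proof (intro conjI allI impI)
  show "3 \<le> length (take (Suc j) p)"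
    using j by simp
  show "distinct (take (Suc j) p)"
    using p by (simp add: is_path_def)
  show "set (take (Suc j) p) \<subseteq> V"
    using subset_trans[OF set_take_subset[of "Suc j" p]] p by (simp add: is_path_def)
  show "E (take (Suc j) p ! i) (take (Suc j) p ! Suc i)" if "Suc i < length (take (Suc j) p)" for i
  proof -
    have "Suc i < length p" "Suc i \<le> j" using that by auto
    then show ?thesis using p by (simp add: is_path_def)
  qed
  have "last (take (Suc j) p) = p ! j"
    using j by (simp add: take_Suc_conv_app_nth)
  moreover have "hd (take (Suc j) p) = hd p"
    by (cases p) auto
  ultimately show "E (last (take (Suc j) p)) (hd (take (Suc j) p))"
    using sympD[OF \<open>symp E\<close> chord] by simp
qed

text \<open>The first vertex of a longest path has all its neighbours on the path; two of them
  would give a chord closing a cycle.\<close>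
lemma forest_has_leaf:
  assumes forest: "forest V E" and "V \<noteq> {}"
  shows "\<exists>v\<in>V. \<forall>x y. E v x \<longrightarrow> E v y \<longrightarrow> x = y"
proof (rule ccontr)
  assume no_leaf: "\<not> ?thesis"
  have sg: "simple_graph V E" and acyclic: "\<nexists>c. is_cycle V E c"
    using forest by (auto simp: forest_def)
  then have sym: "symp E" and irrefl: "\<And>x. \<not> E x x" and edge_in_V: "\<And>x y. E x y \<Longrightarrow> y \<in> V"
    by (auto simp: simple_graph_def symp_def)
  have bounded: "length q < Suc (card V)" if "is_path V E q" for q
    using that sg card_mono[of V "set q"] distinct_card[of q]
    by (simp add: is_path_def simple_graph_def)
  obtain x0 where "x0 \<in> V" using \<open>V \<noteq> {}\<close> by blast
  then have "is_path V E [x0]" by (simp add: is_path_def)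
  then obtain p where p: "is_path V E p"
    and longest: "\<And>q. is_path V E q \<Longrightarrow> length q \<le> length p"
    using Lattices_Big.ex_has_greatest_nat[of "is_path V E" "[x0]" length] bounded by blast
  define v where "v = hd p"
  have "v \<in> V" using p by (auto simp: v_def is_path_def)
  then obtain x y where "E v x" "E v y" "x \<noteq> y" using no_leaf by blast
  then obtain z where vz: "E v z" and z_not_second: "z \<noteq> p ! 1" by blast
  have "z \<in> set p"
  proof (rule ccontr)
    assume "z \<notin> set p"
    moreover have "z \<in> V" "E z (hd p)"
      using edge_in_V[OF vz] sympD[OF sym vz] by (simp_all add: v_def)
    ultimately have "is_path V E (z # p)" using p by (intro is_path_Cons)
    then show False using longest[of "z # p"] by simp
  qed
  then obtain j where j: "j < length p" "p ! j = z" by (meson in_set_conv_nth)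
  have "z \<noteq> v" using vz irrefl by blast
  moreover have "p ! 0 = v" using p by (cases p) (auto simp: v_def is_path_def)
  ultimately have "j \<noteq> 0" using j by metis
  moreover have "j \<noteq> 1" using j z_not_second by auto
  ultimately have "is_cycle V E (take (Suc j) p)"
    using p j vz sym by (intro is_cycle_take_chord) (auto simp: v_def)
  then show False using acyclic by blast
qed

lemma forest_delete_vertex:
  assumes "forest V E"
  shows "forest (V - {v}) (\<lambda>x y. E x y \<and> x \<noteq> v \<and> y \<noteq> v)"
proof -
  have "is_cycle V E c" if "is_cycle (V - {v}) (\<lambda>x y. E x y \<and> x \<noteq> v \<and> y \<noteq> v) c" for c
    using that by (auto simp: is_cycle_def)
  then show ?thesis
    using assms by (auto simp: forest_def simple_graph_def)
qed

lemma successively_delete_absent: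
  "successively E xs \<Longrightarrow> v \<notin> set xs \<Longrightarrow> successively (\<lambda>x y. E x y \<and> x \<noteq> v \<and> y \<noteq> v) xs"
  by (induction xs) (auto simp: successively_Cons)

text \<open>A leaf lies on a path only as an end vertex: inner vertices have two neighbours on it.\<close>
lemma is_path_removeAll_leaf:
  assumes P: "is_path V E P" and "P \<noteq> [v]" and "symp E"
    and leaf: "\<And>x y. E v x \<Longrightarrow> E v y \<Longrightarrow> x = y"
  shows "is_path (V - {v}) (\<lambda>x y. E x y \<and> x \<noteq> v \<and> y \<noteq> v) (removeAll v P)"
proof (cases "v \<in> set P")
  case False
  then show ?thesis
    using P successively_delete_absent[of E P v] by (auto simp: is_path_iff_successively)
next
  case True
  then obtain xs ys where P_split: "P = xs @ v # ys" by (meson split_list)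
  have "distinct P" using P by (simp add: is_path_def)
  then have v_notin: "v \<notin> set xs" "v \<notin> set ys" and removed: "removeAll v P = xs @ ys"
    using P_split by auto
  have "successively E P" using P by (simp add: is_path_iff_successively)
  then have xs_ys: "successively E xs" "successively E ys"
    and to_v: "xs \<noteq> [] \<Longrightarrow> E v (last xs)" and from_v: "ys \<noteq> [] \<Longrightarrow> E v (hd ys)"
    using P_split sympD[OF \<open>symp E\<close>] by (auto simp: successively_append_iff successively_Cons)
  have "xs = [] \<or> ys = []"
  proof (rule ccontr)
    assume "\<not> (xs = [] \<or> ys = [])"
    then have "last xs = hd ys" "last xs \<in> set xs" "hd ys \<in> set ys"
      using leaf to_v from_v by auto
    then show False using \<open>distinct P\<close> P_split by auto
  qed
  moreover have "xs @ ys \<noteq> []" using \<open>P \<noteq> [v]\<close> P_split by auto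
  ultimately show ?thesis
    using removed P P_split v_notin xs_ys
      successively_delete_absent[of E xs v] successively_delete_absent[of E ys v]
    by (auto simp: is_path_iff_successively)
qed

lemma is_path_neighbour_on_path:
  assumes P: "is_path V E P" and "symp E" and "v \<in> set P" and "P \<noteq> [v]"
  shows "\<exists>u\<in>set P. E v u"
proof -
  obtain xs ys where P_split: "P = xs @ v # ys" using \<open>v \<in> set P\<close> by (meson split_list)
  have succ: "successively E P" using P by (simp add: is_path_iff_successively)
  show ?thesis
  proof (cases ys)
    case Nil
    then have "xs \<noteq> []" using \<open>P \<noteq> [v]\<close> P_split by auto
    then have "E (last xs) v" "last xs \<in> set P"
      using succ P_split Nil by (auto simp: successively_append_iff)
    then show ?thesis using sympD[OF \<open>symp E\<close>] by blast
  next
    case (Cons y ys')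
    then show ?thesis using succ P_split by (auto simp: successively_append_iff successively_Cons)
  qed
qed

text \<open>If the leaf v witnesses that P and Q touch, then so does its unique neighbour,
  which lies on both paths.\<close>
lemma not_anticomplete_removeAll_leaf:
  assumes P: "is_path V E P" and Q: "is_path V E Q" and "P \<noteq> [v]" "Q \<noteq> [v]"
    and "simple_graph V E" and leaf: "\<And>x y. E v x \<Longrightarrow> E v y \<Longrightarrow> x = y"
    and touch: "\<not> anticomplete E (set P) (set Q)"
  shows "\<not> anticomplete (\<lambda>x y. E x y \<and> x \<noteq> v \<and> y \<noteq> v) (set (removeAll v P)) (set (removeAll v Q))"
proof -
  have sym: "symp E" and irrefl: "\<And>x. \<not> E x x"
    using \<open>simple_graph V E\<close> by (auto simp: simple_graph_def symp_def)
  have P_nbr: "x \<in> set P" if "v \<in> set P" "E v x" for x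
    using is_path_neighbour_on_path[OF P sym that(1) \<open>P \<noteq> [v]\<close>] leaf that(2) by blast
  have Q_nbr: "x \<in> set Q" if "v \<in> set Q" "E v x" for x
    using is_path_neighbour_on_path[OF Q sym that(1) \<open>Q \<noteq> [v]\<close>] leaf that(2) by blast
  from touch obtain x y where xy: "x \<in> set P" "y \<in> set Q" "x = y \<or> E x y"
    unfolding anticomplete_def by blast
  show ?thesis
  proof (cases "x = v \<or> y = v")
    case False
    then show ?thesis using xy by (auto simp: anticomplete_def)
  next
    case True
    then have "v \<in> set P \<or> v \<in> set Q" using xy by auto
    then obtain u where vu: "E v u"
      using is_path_neighbour_on_path[OF P sym] is_path_neighbour_on_path[OF Q sym]
        \<open>P \<noteq> [v]\<close> \<open>Q \<noteq> [v]\<close> by blast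
    have "u \<in> set P"
    proof (cases "v \<in> set P")
      case False
      then have "E v x" using True xy sympD[OF sym] by auto
      then show ?thesis using leaf[OF vu] xy by simp
    qed (use P_nbr vu in blast)
    moreover have "u \<in> set Q"
    proof (cases "v \<in> set Q")
      case False
      then have "E v y" using True xy by auto
      then show ?thesis using leaf[OF vu] xy by simp
    qed (use Q_nbr vu in blast)
    moreover have "u \<noteq> v" using vu irrefl by blast
    ultimately show ?thesis by (auto simp: anticomplete_def)
  qed
qed

text \<open>Induction on the forest: a one-vertex path at a leaf v is handled by the closed edge at v;
  otherwise v is deleted from all paths, which keeps them paths and keeps touching pairs touching.\<close>
lemma forest_paths_touching_edge_cover:
  assumes "forest V E" and "U \<noteq> {}" and "\<And>P. P \<in> U \<Longrightarrow> is_path V E P"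
  shows "\<exists>P\<in>U. \<exists>a b. (a = b \<or> E a b)
           \<and> (\<forall>Q\<in>U. \<not> anticomplete E (set P) (set Q) \<longrightarrow> a \<in> set Q \<or> b \<in> set Q)"
  using assms
proof (induction "card V" arbitrary: V E U rule: less_induct)
  case less
  have sg: "simple_graph V E" using less.prems(1) by (simp add: forest_def)
  obtain P0 where "P0 \<in> U" using less.prems(2) by blast
  then have "V \<noteq> {}" using less.prems(3)[of P0] by (cases P0) (auto simp: is_path_def)
  then obtain v where "v \<in> V" and leaf: "\<And>x y. E v x \<Longrightarrow> E v y \<Longrightarrow> x = y"
    using forest_has_leaf[OF less.prems(1)] by blast
  show ?case
  proof (cases "[v] \<in> U")
    case True
    obtain w where vw: "v = w \<or> E v w" and nbr_w: "\<And>x. E v x \<Longrightarrow> x = w"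
      using leaf by blast
    have "\<forall>Q\<in>U. \<not> anticomplete E (set [v]) (set Q) \<longrightarrow> v \<in> set Q \<or> w \<in> set Q"
      using nbr_w by (auto simp: anticomplete_def)
    then show ?thesis using True vw by blast
  next
    case False
    define V' where "V' = V - {v}"
    define E' where "E' = (\<lambda>x y. E x y \<and> x \<noteq> v \<and> y \<noteq> v)"
    have smaller: "card V' < card V"
      using \<open>v \<in> V\<close> sg card_Diff1_less[of V v] by (simp add: V'_def simple_graph_def)
    have forest': "forest V' E'"
      using forest_delete_vertex[OF less.prems(1)] by (simp add: V'_def E'_def)
    have paths': "is_path V' E' (removeAll v P)" if "P \<in> U" for P
      using is_path_removeAll_leaf[OF less.prems(3)[OF that]] False that leaf simple_graph_symp[OF sg]
      unfolding V'_def E'_def by fastforce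
    obtain P a b where P: "P \<in> U" and ab: "a = b \<or> E' a b"
      and cover': "\<forall>Q'\<in>removeAll v ` U.
         \<not> anticomplete E' (set (removeAll v P)) (set Q') \<longrightarrow> a \<in> set Q' \<or> b \<in> set Q'"
      using less.hyps[OF smaller forest', of "removeAll v ` U"] less.prems(2) paths' by blast
    have "a \<in> set Q \<or> b \<in> set Q" if "Q \<in> U" "\<not> anticomplete E (set P) (set Q)" for Q
    proof -
      have "P \<noteq> [v]" "Q \<noteq> [v]" using False P that(1) by auto
      then have "\<not> anticomplete E' (set (removeAll v P)) (set (removeAll v Q))"
        using not_anticomplete_removeAll_leaf[OF less.prems(3)[OF P] less.prems(3)[OF that(1)]
            _ _ sg leaf that(2)]
        unfolding E'_def by blast
      then show ?thesis using cover' that(1) by auto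
    qed
    moreover have "a = b \<or> E a b" using ab by (auto simp: E'_def)
    ultimately show ?thesis using P by blast
  qed
qed

lemma anticomplete_paths_meet_closed_edge_at_most_once:
  assumes "finite F" and "symp E" and "a = b \<or> E a b"
    and "pairwise (\<lambda>P Q. anticomplete E (set P) (set Q)) F"
  shows "card {Q\<in>F. a \<in> set Q \<or> b \<in> set Q} \<le> 1"
proof -
  have "Q1 = Q2" if "Q1 \<in> F" "Q2 \<in> F" "a \<in> set Q1 \<or> b \<in> set Q1" "a \<in> set Q2 \<or> b \<in> set Q2"
    for Q1 Q2
    using that assms(3,4) sympD[OF \<open>symp E\<close>] unfolding pairwise_def anticomplete_def by blast
  then show ?thesis using \<open>finite F\<close> by (auto simp: card_le_Suc0_iff_eq)
qed

theorem forest_anticomplete_representatives: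
  fixes S :: "'b set" and F :: "'b \<Rightarrow> 'a list set"
  assumes forest: "forest V E" and "finite S"
    and "\<And>x P. x \<in> S \<Longrightarrow> P \<in> F x \<Longrightarrow> is_path V E P"
    and "\<And>x. x \<in> S \<Longrightarrow> pairwise (\<lambda>P Q. anticomplete E (set P) (set Q)) (F x)"
    and "\<And>x. x \<in> S \<Longrightarrow> card S \<le> card (F x)"
  shows "\<exists>Sel. (\<forall>x\<in>S. Sel x \<in> F x) \<and> pairwise (\<lambda>x y. anticomplete E (set (Sel x)) (set (Sel y))) S"
  using \<open>finite S\<close> assms(3-5)
proof (induction S arbitrary: F rule: finite_remove_induct)
  case empty
  then show ?case by simp
next
  case (remove S)
  have sym: "symp E" using forest simple_graph_symp by (auto simp: forest_def)
  have "0 < card (F x)" if "x \<in> S" for x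
    using remove.prems(3)[OF that] remove.hyps(1,2) card_gt_0_iff[of S] by linarith
  then have F_finite: "finite (F x)" and F_nonempty: "F x \<noteq> {}" if "x \<in> S" for x
    using that card_gt_0_iff by blast+
  have "(\<Union>x\<in>S. F x) \<noteq> {}" using F_nonempty remove.hyps(2) by blast
  then obtain P a b where "P \<in> (\<Union>x\<in>S. F x)" and ab: "a = b \<or> E a b"
    and cover: "\<forall>Q\<in>(\<Union>x\<in>S. F x). \<not> anticomplete E (set P) (set Q) \<longrightarrow> a \<in> set Q \<or> b \<in> set Q"
    using forest_paths_touching_edge_cover[OF forest, of "\<Union>x\<in>S. F x"] remove.prems(1) by blast
  then obtain x0 where x0: "x0 \<in> S" "P \<in> F x0" by blast
  define F' where "F' x = {Q \<in> F x. anticomplete E (set P) (set Q)}" for x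
  have "card (S - {x0}) \<le> card (F' x)" if x: "x \<in> S - {x0}" for x
  proof -
    let ?T = "{Q\<in>F x. a \<in> set Q \<or> b \<in> set Q}"
    have "card (F x) \<le> card (F' x \<union> ?T)"
      using cover x F_finite[of x] by (intro card_mono) (auto simp: F'_def)
    also have "\<dots> \<le> card (F' x) + card ?T"
      by (rule card_Un_le)
    finally have "card (F x) \<le> card (F' x) + card ?T" .
    moreover have "card ?T \<le> 1"
      using anticomplete_paths_meet_closed_edge_at_most_once[OF _ sym ab] F_finite remove.prems(2) x
      by blast
    ultimately show ?thesis
      using remove.prems(3)[of x] x x0(1) remove.hyps(1) by (simp add: card_Diff_singleton)
  qed
  moreover have "\<And>x Q. x \<in> S - {x0} \<Longrightarrow> Q \<in> F' x \<Longrightarrow> is_path V E Q"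
    and "\<And>x. x \<in> S - {x0} \<Longrightarrow> pairwise (\<lambda>P Q. anticomplete E (set P) (set Q)) (F' x)"
    using remove.prems(1,2) by (auto simp: F'_def intro: pairwise_subset)
  ultimately obtain Sel where Sel: "\<forall>x\<in>S - {x0}. Sel x \<in> F' x"
    and Sel_anti: "pairwise (\<lambda>x y. anticomplete E (set (Sel x)) (set (Sel y))) (S - {x0})"
    using remove.IH[OF x0(1), of F'] by blast
  have P_Sel: "anticomplete E (set P) (set (Sel y))" if "y \<in> S - {x0}" for y
    using Sel that by (simp add: F'_def)
  have "pairwise (\<lambda>x y. anticomplete E (set ((Sel(x0 := P)) x)) (set ((Sel(x0 := P)) y))) S"
  proof (rule pairwiseI)
    fix x y assume xy: "x \<in> S" "y \<in> S" "x \<noteq> y"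
    consider "x = x0" | "y = x0" | "x \<noteq> x0" "y \<noteq> x0" by blast
    then show "anticomplete E (set ((Sel(x0 := P)) x)) (set ((Sel(x0 := P)) y))"
    proof cases
      case 1
      then show ?thesis using P_Sel xy by simp
    next
      case 2
      then show ?thesis using P_Sel xy anticomplete_commute[OF sym] by simp
    next
      case 3
      then show ?thesis using pairwiseD(1)[OF Sel_anti] xy by simp
    qed
  qed
  moreover have "\<forall>x\<in>S. (Sel(x0 := P)) x \<in> F x" using Sel x0 by (auto simp: F'_def)
  ultimately show ?case by blast
qed

theorem mainTheorem7:
  fixes V :: "'a set" and E :: "'a \<Rightarrow> 'a \<Rightarrow> bool"
    and k s :: nat and Fam :: "nat \<Rightarrow> 'a list set"
  assumes "forest V E"
    and "\<And>i. 1 \<le> i \<Longrightarrow> i \<le> s \<Longrightarrow> card (Fam i) = fact s * k"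
    and "\<And>i P. 1 \<le> i \<Longrightarrow> i \<le> s \<Longrightarrow> P \<in> Fam i \<Longrightarrow> is_path V E P"
    and "\<And>i P Q. 1 \<le> i \<Longrightarrow> i \<le> s \<Longrightarrow> P \<in> Fam i \<Longrightarrow> Q \<in> Fam i \<Longrightarrow> P \<noteq> Q
           \<Longrightarrow> anticomplete E (set P) (set Q)"
  shows "\<exists>Sel :: nat \<Rightarrow> nat \<Rightarrow> 'a list.
           (\<forall>i j. 1 \<le> i \<and> i \<le> s \<and> 1 \<le> j \<and> j \<le> k \<longrightarrow> Sel i j \<in> Fam i)
         \<and> (\<forall>i j i' j'. 1 \<le> i \<and> i \<le> s \<and> 1 \<le> j \<and> j \<le> k
              \<and> 1 \<le> i' \<and> i' \<le> s \<and> 1 \<le> j' \<and> j' \<le> k \<and> (i, j) \<noteq> (i', j')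
              \<longrightarrow> anticomplete E (set (Sel i j)) (set (Sel i' j')))"
proof -
  let ?S = "{1..s} \<times> {1..k}"
  have "s * k \<le> fact s * k"
    using fact_ge_self[of s] by (rule mult_le_mono1)
  then have large: "card ?S \<le> card (Fam (fst x))" if "x \<in> ?S" for x
    using assms(2) that by auto
  have paths: "is_path V E P" if "x \<in> ?S" "P \<in> Fam (fst x)" for x P
    using assms(3) that by auto
  have anti: "pairwise (\<lambda>P Q. anticomplete E (set P) (set Q)) (Fam (fst x))" if "x \<in> ?S" for x
    using assms(4) that by (auto simp: pairwise_def)
  have "\<exists>Sel. (\<forall>x\<in>?S. Sel x \<in> Fam (fst x))
      \<and> pairwise (\<lambda>x y. anticomplete E (set (Sel x)) (set (Sel y))) ?S"
    by (rule forest_anticomplete_representatives[OF assms(1)]) (blast intro: paths anti large | simp)+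
  then obtain Sel where "\<forall>x\<in>?S. Sel x \<in> Fam (fst x)"
    and "pairwise (\<lambda>x y. anticomplete E (set (Sel x)) (set (Sel y))) ?S"
    by blast
  then show ?thesis
    by (intro exI[of _ "\<lambda>i j. Sel (i, j)"]) (auto simp: pairwise_def)
qed

end
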